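(* The language $L_1=\{\,a^n b^{n+\lfloor \sqrt{n} \rfloor} \mid n \ge 1\,\}$ belongs to $\mathscr{L}_{rt}(\mathrm{MC\text{-}OCA}(1))$, i.e., it is accepted by some real-time one-way cellular automaton that is max communication bounded by a constant.
   Context: A cellular automaton (CA) is a system $\langle S,F,A,B,\#,b_l,b_r,\delta\rangle$ with finite nonempty state set $S$, accepting states $F\subseteq S$, nonempty input alphabet $A\subseteq S$, set $B$ of communication symbols, boundary symbol $\#\notin B$, communication functions $b_l,b_r:S\to B\cup\{\bot\}$ (information sent to the left/right neighbor; $\bot$ means nothing is sent), and local transition function $\delta:(B\cup\{\#,\bot\})\times S\times(B\cup\{\#,\bot\})\to S$. On input $w=a_1\cdots a_n\in A^+$ the array has cells $1,\dots,n$, initial configuration $c_0(i)=a_i$, and $c_{t+1}(i)=\delta(b_r(c_t(i-1)),c_t(i),b_l(c_t(i+1)))$ for $2\le i\le n-1$; the leftmost cell receives $\#$ from the left at the first step and $\bot$ afterwards, symmetrically for the rightmost cell. The input is accepted if at some time the leftmost cell enters a state in $F$. The device has time complexity $t$ if every accepted $w$ is accepted within $t(|w|)$ steps; real time means $t(n)=n$. A one-way CA (OCA) is a CA in which $b_r$ maps every state to $\bot$ and the leftmost cell does not receive the boundary symbol. The number of communications between cells $i$ and $i+1$ up to time $t$ is $\mathrm{com}(i,t)=|\{j: 0\le j<t,\ b_r(c_j(i))\ne\bot \text{ or } b_l(c_j(i+1))\ne\bot\}|$. For a device of time complexity $t$, $\mathrm{mcom}(w)=\max_{1\le i\le |w|-1}\mathrm{com}(i,t(|w|))$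 and $\mathrm{scom}(w)=\sum_{i=1}^{|w|-1}\mathrm{com}(i,t(|w|))$. A device is max (resp. sum) communication bounded by $f$ if every accepted $w$ is accepted with a computation having $\mathrm{mcom}(w)\le f(|w|)$ (resp. $\mathrm{scom}(w)\le f(|w|)$). $\mathrm{MC\text{-}OCA}(f)$ (resp. $\mathrm{SC\text{-}OCA}(f)$, $\mathrm{MC\text{-}CA}(f)$) denotes OCAs (resp. OCAs, CAs) that are max (resp. sum, max) communication bounded by some $g\in O(f)$. $\mathscr{L}_{rt}(X)$ is the family of languages accepted by real-time devices of type $X$. *)

theory Defs
  imports Complex_Main "HOL-Library.Landau_Symbols"
begin

datatype letter = La | Lb

(* Information arriving at a cell: a communication symbol, the boundary symbol #, or nothing (bottom) *)
datatype 'b msg = Sym 'b | Bnd | Bot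

definition to_msg :: "'b option \<Rightarrow> 'b msg" where
  "to_msg x = (case x of None \<Rightarrow> Bot | Some b \<Rightarrow> Sym b)"

(* The set B of communication symbols is the type 'b; "\<bottom>" is None.
   The input alphabet A \<subseteq> S is given as the image of an injective map
   inp from the letters of the language into the states. *)
record ('s,'b) ca =
  states :: "'s set"
  acc    :: "'s set"
  inp    :: "letter \<Rightarrow> 's"
  bl     :: "'s \<Rightarrow> 'b option"
  br     :: "'s \<Rightarrow> 'b option"
  delta  :: "'b msg \<Rightarrow> 's \<Rightarrow> 'b msg \<Rightarrow> 's"

definition wf_ca :: "('s,'b) ca \<Rightarrow> bool" where
  "wf_ca M \<longleftrightarrow> finite (states M) \<and> states M \<noteq> {} \<and> acc M \<subseteq> states M
     \<and> inj (inp M) \<and> range (inp M) \<subseteq> states M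
     \<and> (\<forall>x s y. s \<in> states M \<longrightarrow> delta M x s y \<in> states M)"

definition is_oca :: "('s,'b) ca \<Rightarrow> bool" where
  "is_oca M \<longleftrightarrow> wf_ca M \<and> (\<forall>s. br M s = None)"

(* The leftmost cell does not receive the boundary symbol (it receives bottom),
   the rightmost cell receives # at the first step and bottom afterwards. *)
fun oca_cfg :: "('s,'b) ca \<Rightarrow> letter list \<Rightarrow> nat \<Rightarrow> nat \<Rightarrow> 's" where
  "oca_cfg M w 0 i = inp M (w ! (i - 1))"
| "oca_cfg M w (Suc t) i =
     delta M
       (if i = 1 then Bot else to_msg (br M (oca_cfg M w t (i - 1))))
       (oca_cfg M w t i)
       (if i = length w then (if t = 0 then Bnd else Bot)
        else to_msg (bl M (oca_cfg M w t (i + 1))))"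

definition oca_lang :: "('s,'b) ca \<Rightarrow> letter list set" where
  "oca_lang M = {w. w \<noteq> [] \<and> (\<exists>t. oca_cfg M w t 1 \<in> acc M)}"

definition oca_real_time :: "('s,'b) ca \<Rightarrow> bool" where
  "oca_real_time M \<longleftrightarrow> (\<forall>w \<in> oca_lang M. \<exists>t \<le> length w. oca_cfg M w t 1 \<in> acc M)"

definition oca_com :: "('s,'b) ca \<Rightarrow> letter list \<Rightarrow> nat \<Rightarrow> nat \<Rightarrow> nat" where
  "oca_com M w i t = card {j. j < t \<and> (br M (oca_cfg M w j i) \<noteq> None
                                    \<or> bl M (oca_cfg M w j (i + 1)) \<noteq> None)}"

(* mcom(w) for time complexity t(n) = n (real time); the max over the empty
   range (|w| = 1) is taken to be 0 *)
definition oca_mcom_rt :: "('s,'b) ca \<Rightarrow> letter list \<Rightarrow> nat" where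
  "oca_mcom_rt M w = Max ({0} \<union> {oca_com M w i (length w) | i. 1 \<le> i \<and> i \<le> length w - 1})"

definition L_rt_MC_OCA :: "(nat \<Rightarrow> real) \<Rightarrow> letter list set \<Rightarrow> bool" where
  "L_rt_MC_OCA f L \<longleftrightarrow>
     (\<exists>M :: (nat, nat) ca. is_oca M \<and> oca_real_time M \<and> oca_lang M = L \<and>
        (\<exists>g :: nat \<Rightarrow> real. g \<in> O(f) \<and>
           (\<forall>w \<in> oca_lang M. real (oca_mcom_rt M w) \<le> g (length w))))"

definition L1 :: "letter list set" where
  "L1 = {replicate n La @ replicate (n + nat \<lfloor>sqrt (real n)\<rfloor>) Lb | n. n \<ge> 1}"

end

theory Submission
  imports Defs "HOL-Library.Discrete_Functions" "HOL-Library.Countable"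
begin

(* On an input a^n b^m, a "ready" signal starts at the right border at time 1 and moves
   left one cell per step, so it reaches cell 1 exactly at time n + m.  Inside the a-block,
   writing p = n - i for the distance of cell i from the last a, a counter signal q starts
   at the a/b border and leaves cell p at time q_send p = 2p + 2 + floor(sqrt(p+1)): it moves
   at speed 1/2 and is delayed one extra step at every p with p+1 a perfect square.  These
   "marked" cells are found on the fly by a slow signal z (speed 1/2) and a fast signal f
   (speed 1) bouncing between marked cells and the midpoints k^2+k between them.  Cell 1
   accepts iff q and the ready signal arrive together, i.e. iff n + m = 2n + floor(sqrt n).
   A letter b followed by a letter a launches a kill signal that makes acceptance impossible.
   Every signal crosses every cell boundary at most once, so at most 5 messages pass any
   boundary: the letter at time 0, z, q, f and the ready signal. *)


lemma oca_cfg_in_states: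
  assumes "wf_ca M"
  shows "oca_cfg M w t i \<in> states M"
proof (induction t arbitrary: i)
  case 0
  then show ?case using assms by (auto simp: wf_ca_def)
next
  case (Suc t)
  then show ?case using assms by (simp add: wf_ca_def)
qed

(* Re-encoding states and communication symbols of countable type as natural numbers;
   the definition of L_rt_MC_OCA quantifies over automata of type (nat, nat) ca. *)
definition nat_ca :: "('s::countable, 'b::countable) ca \<Rightarrow> (nat, nat) ca" where
  "nat_ca M =
     \<lparr> states = to_nat ` states M, acc = to_nat ` acc M, inp = to_nat \<circ> inp M,
       bl = map_option to_nat \<circ> bl M \<circ> from_nat,
       br = map_option to_nat \<circ> br M \<circ> from_nat,
       delta = (\<lambda>x s y. to_nat (delta M (map_msg from_nat x) (from_nat s) (map_msg from_nat y))) \<rparr>"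

lemma decode_to_msg: "map_msg from_nat (to_msg (map_option to_nat x)) = to_msg x"
  by (cases x) (simp_all add: to_msg_def)

lemma oca_cfg_nat_ca: "oca_cfg (nat_ca M) w t i = to_nat (oca_cfg M w t i)"
proof (induction t arbitrary: i)
  case 0
  then show ?case by (simp add: nat_ca_def)
next
  case (Suc t)
  then show ?case
    by (simp add: nat_ca_def decode_to_msg if_distrib[of "map_msg from_nat"])
qed

lemma is_oca_nat_ca:
  assumes "is_oca M"
  shows "is_oca (nat_ca M)"
  using assms inj_compose[OF inj_to_nat, of "inp M"]
  by (auto simp: is_oca_def wf_ca_def nat_ca_def)

lemma acc_nat_ca: "oca_cfg (nat_ca M) w t i \<in> acc (nat_ca M) \<longleftrightarrow> oca_cfg M w t i \<in> acc M"
  unfolding oca_cfg_nat_ca by (simp add: nat_ca_def inj_image_mem_iff[OF inj_to_nat])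

lemma oca_lang_nat_ca: "oca_lang (nat_ca M) = oca_lang M"
  by (simp add: oca_lang_def acc_nat_ca)

lemma oca_real_time_nat_ca: "oca_real_time (nat_ca M) \<longleftrightarrow> oca_real_time M"
  by (simp add: oca_real_time_def oca_lang_nat_ca acc_nat_ca)

lemma oca_mcom_rt_nat_ca: "oca_mcom_rt (nat_ca M) w = oca_mcom_rt M w"
  unfolding oca_mcom_rt_def oca_com_def oca_cfg_nat_ca by (simp add: nat_ca_def)

lemma L_rt_MC_OCA_intro:
  fixes M :: "('s::countable, 'b::countable) ca"
  assumes "is_oca M" and "oca_real_time M" and "oca_lang M = L" and "g \<in> O(f)"
    and "\<And>w. w \<in> L \<Longrightarrow> real (oca_mcom_rt M w) \<le> g (length w)"
  shows "L_rt_MC_OCA f L"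
  unfolding L_rt_MC_OCA_def
  using assms is_oca_nat_ca[of M]
  by (intro exI[of _ "nat_ca M"] conjI exI[of _ g])
     (simp_all add: oca_real_time_nat_ca oca_lang_nat_ca oca_mcom_rt_nat_ca)


section \<open>Integer square roots\<close>

(* lag p = floor(sqrt(p+1)) is the total delay of the counter signal at distance p. *)
definition lag :: "nat \<Rightarrow> nat" where
  "lag p = floor_sqrt (Suc p)"

(* Marked cells: p+1 is a perfect square.  Midpoints: p = k^2 + k lies halfway between
   the marked cells k^2 - 1 and (k+1)^2 - 1. *)
definition is_mark :: "nat \<Rightarrow> bool" where
  "is_mark p \<longleftrightarrow> Suc p = lag p * lag p"

definition is_mid :: "nat \<Rightarrow> bool" where
  "is_mid p \<longleftrightarrow> p = lag p * lag p + lag p"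

lemma lag_lo: "lag p * lag p \<le> Suc p"
  using floor_sqrt_power2_le[of "Suc p"] by (simp add: lag_def power2_eq_square)

lemma lag_hi: "Suc p < (lag p + 1) * (lag p + 1)"
  using Suc_floor_sqrt_power2_gt[of "Suc p"] by (simp add: lag_def power2_eq_square)

lemma lag_pos: "lag p \<ge> 1"
  by (simp add: lag_def Suc_le_eq)

lemma is_mark_iff_square: "is_mark p \<longleftrightarrow> (\<exists>k. Suc p = k\<^sup>2)"
proof
  assume "\<exists>k. Suc p = k\<^sup>2"
  then obtain k where k: "Suc p = k\<^sup>2" by blast
  then have "lag p = k" by (simp add: lag_def)
  with k show "is_mark p" by (simp add: is_mark_def power2_eq_square)
qed (auto simp: is_mark_def power2_eq_square)

lemma lag_prev:
  assumes "p \<ge> 1"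
  shows "lag p = (if is_mark p then Suc (lag (p - 1)) else lag (p - 1))"
proof -
  have "Suc (p - 1) = p" using assms by simp
  then show ?thesis using floor_sqrt_Suc[of p] by (simp add: lag_def is_mark_iff_square)
qed

lemma mark_not_mid: "is_mark p \<Longrightarrow> is_mid p \<Longrightarrow> False"
  using lag_pos[of p] by (auto simp: is_mark_def is_mid_def)

lemma case_mark:
  assumes "p \<ge> 1" "is_mark p"
  obtains j where "lag p = Suc j" "lag (p - 1) = j" "j \<ge> 1" "p = j * j + 2 * j"
proof
  show lp: "lag p = Suc (lag (p - 1))" using lag_prev[OF assms(1)] assms(2) by simp
  show "lag (p - 1) \<ge> 1" by (rule lag_pos)
  show "p = lag (p - 1) * lag (p - 1) + 2 * lag (p - 1)"
    using assms(2) lp by (simp add: is_mark_def)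
qed simp

lemma case_nomark:
  assumes "p \<ge> 1" "\<not> is_mark p"
  shows "lag (p - 1) = lag p" "lag p * lag p \<le> p" "p < lag p * lag p + 2 * lag p"
  using lag_prev[OF assms(1)] lag_lo[of p] lag_hi[of p] assms(2)
  by (auto simp: is_mark_def algebra_simps)

lemma nat_floor_sqrt: "nat \<lfloor>sqrt (real n)\<rfloor> = floor_sqrt n"
proof -
  let ?k = "floor_sqrt n"
  have "real (?k\<^sup>2) \<le> real n" "real n < real ((Suc ?k)\<^sup>2)"
    using Suc_floor_sqrt_power2_gt[of n] by (simp_all only: of_nat_le_iff of_nat_less_iff) simp
  then have "(real ?k)\<^sup>2 \<le> real n" "real n < (real ?k + 1)\<^sup>2"
    by (simp_all add: add.commute)
  then have "real ?k \<le> sqrt (real n)" "sqrt (real n) < real ?k + 1"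
    by (simp_all add: real_le_rsqrt real_sqrt_less_iff real_less_lsqrt)
  then have "\<lfloor>sqrt (real n)\<rfloor> = int ?k" by linarith
  then show ?thesis by simp
qed


section \<open>The space-time schedule of the signals\<close>

(* Throughout, p is the distance of an a-cell from the last a, and all schedules give
   the value a track of cell p holds at time t >= 1. *)

(* The slow signal z is received by cell p at time 2p (value 1) and forwarded to the left
   neighbour at time 2p + 1 (value 2); the last a-cell holds it at time 1. *)
definition z_sig :: "nat \<Rightarrow> nat \<Rightarrow> nat" where
  "z_sig p t = (if t = 2 * p \<and> p \<ge> 1 then 1 else if t = 2 * p + 1 then 2 else 0)"

(* The counter signal q arrives at cell p >= 1 at time q_arrive p, holds for one step
   (two at a marked cell) and is forwarded at time q_send p.  The last a-cell starts it
   by counting 5, 6, 7.  The values 2, 4, 7 mean "forwarding now". *)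
definition q_arrive :: "nat \<Rightarrow> nat" where
  "q_arrive p = 2 * p + 1 + lag p - (if is_mark p then 1 else 0)"

definition q_send :: "nat \<Rightarrow> nat" where
  "q_send p = 2 * p + 2 + lag p"

definition q_sig :: "nat \<Rightarrow> nat \<Rightarrow> nat" where
  "q_sig p t =
     (if p = 0 then (if t = 1 then 5 else if t = 2 then 6 else if t = 3 then 7 else 0)
      else if t = q_arrive p then 1
      else if t = q_arrive p + 1 then (if is_mark p then 3 else 2)
      else if t = q_arrive p + 2 \<and> is_mark p then 4 else 0)"

definition q_sending :: "nat \<Rightarrow> bool" where
  "q_sending q \<longleftrightarrow> q = 2 \<or> q = 4 \<or> q = 7"

definition m_sig :: "nat \<Rightarrow> nat \<Rightarrow> nat" where
  "m_sig p t = (if is_mark p \<and> 2 * p + 1 \<le> t then 2 else if is_mid p \<and> 2 * p + 1 \<le> t then 1 else 0)"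

(* The fast signal f passes cell p at time f_time p.  With value 1 it runs from the marked
   cell k^2 - 1 to the midpoint k^2 + k, with value 2 from there to the next marked cell
   (k+1)^2 - 1; at both destinations it meets z, which fixes the marker. *)
definition f_time :: "nat \<Rightarrow> nat" where
  "f_time p = (if p < lag p * lag p + lag p then p + lag p * lag p + lag p + 1
               else p + lag p * lag p + 2 * lag p + 1)"

definition f_sig :: "nat \<Rightarrow> nat \<Rightarrow> nat" where
  "f_sig p t = (if t \<noteq> f_time p then 0 else if p < lag p * lag p + lag p then 1 else 2)"

(* The local rules of the four tracks; arguments ending in "in" come from the right
   neighbour. *)
definition z_rule :: "nat \<Rightarrow> bool \<Rightarrow> nat" where
  "z_rule z zin = (if z = 1 then 2 else if zin then 1 else 0)"

definition q_rule :: "nat \<Rightarrow> nat \<Rightarrow> bool \<Rightarrow> nat" where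
  "q_rule q mk qin =
     (if q = 1 then (if mk = 2 then 3 else 2) else if q = 3 then 4
      else if q = 5 then 6 else if q = 6 then 7 else if q = 0 then (if qin then 1 else 0) else 0)"

(* f is emitted when q is delayed at a marked cell (or started at the last a-cell) and when
   q arrives at a midpoint; it is absorbed where it meets z. *)
definition f_rule :: "nat \<Rightarrow> nat \<Rightarrow> nat \<Rightarrow> bool \<Rightarrow> nat \<Rightarrow> nat" where
  "f_rule q mk z qin fin =
     (if q = 3 \<or> q = 6 then 1 else if q = 0 \<and> qin \<and> mk = 1 then 2
      else if fin \<noteq> 0 \<and> z = 1 then 0 else fin)"

definition m_rule :: "nat \<Rightarrow> nat \<Rightarrow> nat \<Rightarrow> nat" where
  "m_rule mk z fin = (if fin \<noteq> 0 \<and> z = 1 then (if fin = 1 then 1 else 2) else mk)"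

(* The f-track never exceeds 2, so the automaton may clamp incoming f-values to 2. *)
lemma f_sig_le: "f_sig p t \<le> 2"
  by (simp add: f_sig_def)

lemma q_arrive_ge: "p \<ge> 1 \<Longrightarrow> q_arrive p \<ge> 2 * p + 1"
  using lag_pos[of p] lag_prev[of p] by (auto simp: q_arrive_def)

lemma q_sending_time: "q_sending (q_sig p t) \<longleftrightarrow> t = q_send p"
proof (cases "p = 0")
  case True
  then show ?thesis by (auto simp: q_sending_def q_sig_def q_send_def lag_def)
next
  case False
  then show ?thesis using lag_pos[of p] lag_prev[of p]
    by (auto simp: q_sending_def q_sig_def q_send_def q_arrive_def)
qed

lemma q_send_prev: "p \<ge> 1 \<Longrightarrow> q_send (p - 1) + 1 = q_arrive p"
  using lag_prev[of p] by (cases "is_mark p") (auto simp: q_send_def q_arrive_def)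

(* At time 2p, when z reaches cell p, the f-track of the right neighbour carries the
   marker that cell p has to adopt. *)
lemma f_meets_z:
  assumes "p \<ge> 1"
  shows "f_sig (p - 1) (2 * p) = (if is_mid p then 1 else if is_mark p then 2 else 0)"
proof (cases "is_mark p")
  case True
  then obtain j where "lag p = Suc j" "lag (p - 1) = j" "j \<ge> 1" "p = j * j + 2 * j"
    using case_mark assms by blast
  then show ?thesis using True by (auto simp: f_sig_def f_time_def dest: mark_not_mid)
next
  case False
  then show ?thesis using case_nomark[OF assms False] assms
    by (auto simp: f_sig_def f_time_def is_mid_def)
qed


(* For p >= 1 each track of cell p at time t + 1 arises by its local rule from cell p and
   its right neighbour p - 1 at time t; the variants for p = 0 treat the last a-cell,
   whose right neighbour is a b-cell and sends no z, q or f. *)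

lemma z_step: "p \<ge> 1 \<Longrightarrow> z_rule (z_sig p t) (z_sig (p - 1) t = 2) = z_sig p (t + 1)"
  by (auto simp: z_rule_def z_sig_def)

lemma z_step0: "t \<ge> 1 \<Longrightarrow> z_rule (z_sig 0 t) False = z_sig 0 (t + 1)"
  by (auto simp: z_rule_def z_sig_def)

lemma q_step: "p \<ge> 1 \<Longrightarrow> q_rule (q_sig p t) (m_sig p t) (q_sending (q_sig (p - 1) t)) = q_sig p (t + 1)"
  using q_send_prev[of p] q_arrive_ge[of p] q_sending_time[of "p - 1" t] lag_pos[of p]
  by (auto simp: q_rule_def q_sig_def m_sig_def dest: mark_not_mid)

lemma q_step0: "t \<ge> 1 \<Longrightarrow> q_rule (q_sig 0 t) (m_sig 0 t) False = q_sig 0 (t + 1)"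
  by (auto simp: q_rule_def q_sig_def)

lemma m_step: "p \<ge> 1 \<Longrightarrow> m_rule (m_sig p t) (z_sig p t) (f_sig (p - 1) t) = m_sig p (t + 1)"
  using f_meets_z[of p] by (auto simp: m_rule_def z_sig_def m_sig_def dest: mark_not_mid)

lemma m_step0: "t \<ge> 1 \<Longrightarrow> m_rule (m_sig 0 t) (z_sig 0 t) 0 = m_sig 0 (t + 1)"
  by (auto simp: m_rule_def m_sig_def)

lemma f_step0: "t \<ge> 1 \<Longrightarrow> f_rule (q_sig 0 t) (m_sig 0 t) (z_sig 0 t) False 0 = f_sig 0 (t + 1)"
  by (auto simp: f_rule_def q_sig_def f_sig_def f_time_def lag_def)

lemma f_step_mark:
  assumes p: "p \<ge> 1" and mark: "is_mark p"
  shows "f_rule (q_sig p t) (m_sig p t) (z_sig p t) (q_sending (q_sig (p - 1) t)) (f_sig (p - 1) t)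
         = f_sig p (t + 1)"
proof -
  obtain j where j: "lag p = Suc j" "lag (p - 1) = j" "j \<ge> 1" "p = j * j + 2 * j"
    using case_mark p mark by blast
  have tq: "q_arrive p = 2 * p + 1 + j" using j mark by (simp add: q_arrive_def)
  have f_in: "f_sig (p - 1) t = (if t = 2 * p then 2 else 0)"
    unfolding f_sig_def f_time_def j(2) using j(3,4) by auto
  have f_out: "f_sig p (t + 1) = (if t = q_arrive p + 1 then 1 else 0)"
    unfolding f_sig_def f_time_def j(1) using j(4) tq by auto
  have "m_sig p t \<noteq> 1" using mark by (auto simp: m_sig_def dest: mark_not_mid)
  then show ?thesis using mark f_in f_out tq p
    by (auto simp: f_rule_def z_sig_def q_sig_def)
qed

lemma f_step_mid:
  assumes p: "p \<ge> 1" and mid: "is_mid p"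
  shows "f_rule (q_sig p t) (m_sig p t) (z_sig p t) (q_sending (q_sig (p - 1) t)) (f_sig (p - 1) t)
         = f_sig p (t + 1)"
proof -
  let ?k = "lag p"
  have nomark: "\<not> is_mark p" using mid mark_not_mid by blast
  have hp: "p = ?k * ?k + ?k" using mid by (simp add: is_mid_def)
  have k1: "?k \<ge> 1" by (rule lag_pos)
  have tq: "q_arrive p = 2 * p + 1 + ?k" using nomark by (simp add: q_arrive_def)
  have f_in: "f_sig (p - 1) t = (if t = 2 * p then 1 else 0)"
    using case_nomark(1)[OF p nomark] hp k1 by (simp add: f_sig_def f_time_def)
  have f_out: "f_sig p (t + 1) = (if t + 1 = q_arrive p then 2 else 0)"
    using hp tq by (simp add: f_sig_def f_time_def)
  have qin: "q_sending (q_sig (p - 1) t) \<longleftrightarrow> t + 1 = q_arrive p"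
    using q_sending_time[of "p - 1" t] q_send_prev[OF p] by auto
  have "m_sig p t = (if 2 * p + 1 \<le> t then 1 else 0)"
    using mid nomark by (simp add: m_sig_def)
  then show ?thesis using nomark f_in f_out qin tq k1 p
    by (auto simp: f_rule_def z_sig_def q_sig_def)
qed

lemma f_step_plain:
  assumes p: "p \<ge> 1" and nomark: "\<not> is_mark p" and nomid: "\<not> is_mid p"
  shows "f_rule (q_sig p t) (m_sig p t) (z_sig p t) (q_sending (q_sig (p - 1) t)) (f_sig (p - 1) t)
         = f_sig p (t + 1)"
proof -
  let ?k = "lag p"
  have "p \<noteq> ?k * ?k + ?k" using nomid by (simp add: is_mid_def)
  then have "f_sig (p - 1) t = f_sig p (t + 1)"
    using case_nomark(1)[OF p nomark] p by (auto simp: f_sig_def f_time_def)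
  moreover have "f_sig (p - 1) (2 * p) = 0" using f_meets_z[OF p] nomark nomid by simp
  moreover have "m_sig p t = 0" using nomark nomid by (simp add: m_sig_def)
  ultimately show ?thesis using nomark p
    by (auto simp: f_rule_def z_sig_def q_sig_def)
qed

lemma f_step:
  "p \<ge> 1 \<Longrightarrow> f_rule (q_sig p t) (m_sig p t) (z_sig p t) (q_sending (q_sig (p - 1) t)) (f_sig (p - 1) t)
   = f_sig p (t + 1)"
  using f_step_mark f_step_mid f_step_plain by blast


section \<open>The automaton\<close>

(* Cells: the initial letter, a dead cell, a b-cell, and an a-cell holding the tracks
   z, q, f, marker and the ready flag. *)
datatype cell = Init letter | Dead | BCell bool | ACell nat nat nat nat bool

(* Messages to the left: the own letter (time 0), a kill signal, or the signals
   "z forwarded", "q forwarded", the f-value and the ready flag. *)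
datatype signal = Letter letter | Signals bool bool nat bool | Kill

lemma UNIV_letter: "(UNIV :: letter set) = {La, Lb}"
  using letter.exhaust by auto

instance letter :: finite
  by standard (simp add: UNIV_letter)

instance letter :: countable by countable_datatype
instance cell :: countable by countable_datatype
instance signal :: countable by countable_datatype

definition a_update :: "nat \<Rightarrow> nat \<Rightarrow> nat \<Rightarrow> nat \<Rightarrow> bool \<Rightarrow> bool \<Rightarrow> nat \<Rightarrow> bool \<Rightarrow> cell" where
  "a_update z q f mk zin qin fin rin =
     ACell (z_rule z zin) (q_rule q mk qin) (f_rule q mk z qin fin) (m_rule mk z fin) rin"

(* The transition, depending only on the message from the right neighbour.  In the first
   step an a followed by b starts z and q; a b followed by a dies, and death spreads left. *)
fun step :: "signal msg \<Rightarrow> cell \<Rightarrow> cell" where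
  "step x (Init c) = (case x of
      Bnd \<Rightarrow> (if c = La then ACell 0 0 0 0 True else BCell True)
    | Sym (Letter d) \<Rightarrow> (if c = La then (if d = La then ACell 0 0 0 0 False else ACell 2 5 0 2 False)
                        else (if d = Lb then BCell False else Dead))
    | _ \<Rightarrow> Dead)"
| "step x Dead = Dead"
| "step x (BCell r) = (case x of
      Sym Kill \<Rightarrow> Dead | Sym (Letter d) \<Rightarrow> Dead
    | Sym (Signals zs qs fs rs) \<Rightarrow> BCell rs | _ \<Rightarrow> BCell False)"
| "step x (ACell z q f mk r) = (case x of
      Sym Kill \<Rightarrow> Dead | Sym (Letter d) \<Rightarrow> Dead
    | Sym (Signals zs qs fs rs) \<Rightarrow> a_update z q f mk zs qs (min fs 2) rs
    | _ \<Rightarrow> a_update z q f mk False False 0 False)"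

fun out :: "cell \<Rightarrow> signal option" where
  "out (Init c) = Some (Letter c)"
| "out Dead = Some Kill"
| "out (BCell r) = (if r then Some (Signals False False 0 True) else None)"
| "out (ACell z q f mk r) =
     (if z = 2 \<or> q_sending q \<or> f \<noteq> 0 \<or> r then Some (Signals (z = 2) (q_sending q) f r) else None)"

definition cell_states :: "cell set" where
  "cell_states = {s. case s of ACell z q f mk r \<Rightarrow> z \<le> 2 \<and> q \<le> 7 \<and> f \<le> 2 \<and> mk \<le> 2 | _ \<Rightarrow> True}"

(* Accept when the ready signal and the counter signal meet. *)
definition accepting :: "cell set" where
  "accepting = {ACell z q f mk True | z q f mk. q_sending q}"

definition sqrt_oca :: "(cell, signal) ca" where
  "sqrt_oca = \<lparr> states = cell_states, acc = accepting \<inter> cell_states, inp = Init,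
                bl = out, br = (\<lambda>_. None), delta = (\<lambda>x s y. step y s) \<rparr>"

lemma finite_cell_states: "finite cell_states"
proof -
  have "cell_states \<subseteq> range Init \<union> {Dead} \<union> range BCell \<union>
     (\<lambda>(z, q, f, mk, r). ACell z q f mk r) ` ({..2} \<times> {..7} \<times> {..2} \<times> {..2} \<times> UNIV)"
  proof
    fix s assume "s \<in> cell_states"
    then show "s \<in> range Init \<union> {Dead} \<union> range BCell \<union>
       (\<lambda>(z, q, f, mk, r). ACell z q f mk r) ` ({..2} \<times> {..7} \<times> {..2} \<times> {..2} \<times> UNIV)"
      by (cases s) (auto simp: cell_states_def image_iff)
  qed
  then show ?thesis by (rule finite_subset) simp
qed

lemma step_cell_states: "s \<in> cell_states \<Longrightarrow> step x s \<in> cell_states"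
  by (cases s; cases x)
     (auto simp: cell_states_def a_update_def z_rule_def q_rule_def f_rule_def m_rule_def
           split: signal.splits)

lemma is_oca_sqrt_oca: "is_oca sqrt_oca"
proof -
  have "Dead \<in> cell_states" by (simp add: cell_states_def)
  then show ?thesis using finite_cell_states step_cell_states
    by (auto simp: is_oca_def wf_ca_def sqrt_oca_def inj_def) (simp add: cell_states_def)
qed

lemma acc_sqrt_oca: "oca_cfg sqrt_oca w t i \<in> acc sqrt_oca \<longleftrightarrow> oca_cfg sqrt_oca w t i \<in> accepting"
  using oca_cfg_in_states[of sqrt_oca w t i] is_oca_sqrt_oca
  by (auto simp: is_oca_def sqrt_oca_def)

lemma cfg_0: "oca_cfg sqrt_oca w 0 i = Init (w ! (i - 1))"
  by (simp add: sqrt_oca_def)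

lemma cfg_Suc:
  "oca_cfg sqrt_oca w (Suc t) i =
     step (if i = length w then (if t = 0 then Bnd else Bot)
           else to_msg (out (oca_cfg sqrt_oca w t (i + 1)))) (oca_cfg sqrt_oca w t i)"
  by (simp add: sqrt_oca_def)

declare oca_cfg.simps[simp del]

lemma step_ACell_ACell:
  "step (to_msg (out (ACell z q f mk r))) (ACell z' q' f' mk' r') =
     a_update z' q' f' mk' (z = 2) (q_sending q) (min f 2) r"
  by (auto simp: to_msg_def)


(* The configuration at time t >= 1 on a^n b^m, with n, m >= 1. *)
definition sched :: "nat \<Rightarrow> nat \<Rightarrow> nat \<Rightarrow> nat \<Rightarrow> cell" where
  "sched n m t i =
     (if i \<le> n then ACell (z_sig (n - i) t) (q_sig (n - i) t) (f_sig (n - i) t) (m_sig (n - i) t)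
                         (t + i = n + m + 1)
      else BCell (t + i = n + m + 1))"

(* After one step every cell has read the letter of its right neighbour; the last a-cell
   has started z and q and marks itself, since 0 + 1 is a square. *)
lemma sched_init:
  assumes w: "w = replicate n La @ replicate m Lb" and n: "n \<ge> 1" and m: "m \<ge> 1"
    and i: "1 \<le> i" "i \<le> n + m"
  shows "oca_cfg sqrt_oca w (Suc 0) i = sched n m (Suc 0) i"
proof -
  have letter: "oca_cfg sqrt_oca w 0 j = Init (if j \<le> n then La else Lb)"
    if "1 \<le> j" "j \<le> n + m" for j
    using w that by (auto simp: cfg_0 nth_append)
  show ?thesis
  proof (cases "i = n + m")
    case True
    then show ?thesis using w n m letter[of i] by (simp add: cfg_Suc sched_def)
  next
    case False
    then have "oca_cfg sqrt_oca w (Suc 0) i =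
        step (Sym (Letter (if i + 1 \<le> n then La else Lb))) (Init (if i \<le> n then La else Lb))"
      using w i letter[of i] letter[of "i + 1"] by (simp add: cfg_Suc to_msg_def)
    moreover have "q_arrive (n - i) \<ge> 2 * (n - i) + 1" if "i < n"
      using that q_arrive_ge[of "n - i"] by simp
    ultimately show ?thesis using False i
      by (auto simp: sched_def z_sig_def q_sig_def f_sig_def f_time_def m_sig_def is_mark_def lag_def)
  qed
qed

lemma sched_step:
  assumes n: "n \<ge> 1" and m: "m \<ge> 1" and t: "t \<ge> 1" and i: "1 \<le> i" "i \<le> n + m"
  shows "sched n m (Suc t) i =
           step (if i = n + m then Bot else to_msg (out (sched n m t (i + 1)))) (sched n m t i)"
proof -
  consider (inner) "i < n" | (border) "i = n" | (last) "i = n + m" | (b) "n < i" "i < n + m"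
    using i m by linarith
  then show ?thesis
  proof cases
    case inner
    define p where "p = n - i"
    have p: "p \<ge> 1" "n - (i + 1) = p - 1" using inner by (simp_all add: p_def)
    have right: "sched n m t (i + 1) =
        ACell (z_sig (p - 1) t) (q_sig (p - 1) t) (f_sig (p - 1) t) (m_sig (p - 1) t) (t + (i + 1) = n + m + 1)"
      using inner unfolding sched_def p(2) by simp
    have left: "sched n m t i = ACell (z_sig p t) (q_sig p t) (f_sig p t) (m_sig p t) (t + i = n + m + 1)"
      using inner by (simp add: sched_def p_def)
    have "sched n m (Suc t) i =
        ACell (z_sig p (t + 1)) (q_sig p (t + 1)) (f_sig p (t + 1)) (m_sig p (t + 1)) (t + (i + 1) = n + m + 1)"
      using inner by (simp add: sched_def p_def)
    also have "\<dots> = a_update (z_sig p t) (q_sig p t) (f_sig p t) (m_sig p t) (z_sig (p - 1) t = 2)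
          (q_sending (q_sig (p - 1) t)) (f_sig (p - 1) t) (t + (i + 1) = n + m + 1)"
      unfolding a_update_def z_step[OF p(1)] q_step[OF p(1)] f_step[OF p(1)] m_step[OF p(1)] ..
    also have "\<dots> = step (to_msg (out (sched n m t (i + 1)))) (sched n m t i)"
      unfolding right left step_ACell_ACell using f_sig_le[of "p - 1" t] by (simp add: min_absorb1)
    finally show ?thesis using inner by simp
  next
    case border
    then show ?thesis using m t
      by (simp add: sched_def to_msg_def a_update_def z_step0 q_step0 f_step0 m_step0)
  next
    case last
    then show ?thesis using m t by (simp add: sched_def)
  next
    case b
    then show ?thesis by (simp add: sched_def to_msg_def)
  qed
qed

lemma cfg_sched:
  assumes w: "w = replicate n La @ replicate m Lb" and n: "n \<ge> 1" and m: "m \<ge> 1"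
  shows "t \<ge> 1 \<Longrightarrow> 1 \<le> i \<Longrightarrow> i \<le> n + m \<Longrightarrow> oca_cfg sqrt_oca w t i = sched n m t i"
proof (induction t arbitrary: i)
  case 0
  then show ?case by simp
next
  case (Suc t)
  show ?case
  proof (cases "t = 0")
    case True
    then show ?thesis using sched_init[OF w n m] Suc.prems by simp
  next
    case False
    have "oca_cfg sqrt_oca w (Suc t) i =
        step (if i = n + m then Bot else to_msg (out (sched n m t (i + 1)))) (sched n m t i)"
      using Suc.IH Suc.prems False w by (cases "i = n + m") (simp_all add: cfg_Suc)
    then show ?thesis using sched_step[OF n m _ Suc.prems(2,3)] False by simp
  qed
qed

lemma accept_sorted:
  assumes w: "w = replicate n La @ replicate m Lb" and n: "n \<ge> 1" and m: "m \<ge> 1"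
  shows "oca_cfg sqrt_oca w (n + m) 1 \<in> accepting \<longleftrightarrow> m = n + floor_sqrt n"
proof -
  have "oca_cfg sqrt_oca w (n + m) 1 =
      ACell (z_sig (n - 1) (n + m)) (q_sig (n - 1) (n + m)) (f_sig (n - 1) (n + m)) (m_sig (n - 1) (n + m)) True"
    using cfg_sched[OF w n m, of "n + m" 1] n m by (simp add: sched_def)
  moreover have "q_send (n - 1) = 2 * n + floor_sqrt n"
    using n by (simp add: q_send_def lag_def)
  ultimately show ?thesis using q_sending_time[of "n - 1" "n + m"] by (auto simp: accepting_def)
qed


fun ready :: "cell \<Rightarrow> bool" where
  "ready (ACell z q f mk r) = r" | "ready (BCell r) = r" | "ready _ = False"

lemma ready_step: "ready (step x s) \<Longrightarrow> x = Bnd \<or> (\<exists>a b c. x = Sym (Signals a b c True))"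
  by (cases s; cases x) (auto simp: a_update_def split: signal.splits if_splits)

lemma ready_out: "to_msg (out s) = Sym (Signals a b c True) \<Longrightarrow> ready s"
  by (cases s) (auto simp: to_msg_def split: if_splits)

(* The ready flag travels from the right border at speed 1: cell i can only be ready at
   time |w| + 1 - i.  Hence acceptance happens only at time |w|. *)
lemma ready_time:
  "ready (oca_cfg sqrt_oca w t i) \<Longrightarrow> 1 \<le> i \<Longrightarrow> i \<le> length w \<Longrightarrow> t + i = length w + 1"
proof (induction t arbitrary: i)
  case 0
  then show ?case by (simp add: cfg_0)
next
  case (Suc t)
  show ?case
  proof (cases "i = length w")
    case True
    then show ?thesis using Suc.prems ready_step[of Bot] by (cases "t = 0") (auto simp: cfg_Suc)
  next
    case False
    let ?x = "to_msg (out (oca_cfg sqrt_oca w t (i + 1)))"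
    have "ready (step ?x (oca_cfg sqrt_oca w t i))" using Suc.prems False by (simp add: cfg_Suc)
    moreover have "?x \<noteq> Bnd" by (simp add: to_msg_def split: option.splits)
    ultimately have "ready (oca_cfg sqrt_oca w t (i + 1))" using ready_step ready_out by blast
    then show ?thesis using Suc.IH[of "i + 1"] Suc.prems False by simp
  qed
qed

lemma accept_time: "oca_cfg sqrt_oca w t 1 \<in> accepting \<Longrightarrow> w \<noteq> [] \<Longrightarrow> t = length w"
  using ready_time[of w t 1] by (cases w) (auto simp: accepting_def)

lemma cfg_not_Init: "t \<ge> 1 \<Longrightarrow> oca_cfg sqrt_oca w t i \<noteq> Init c"
proof -
  have "step x s \<noteq> Init c" for x s
    by (cases s; cases x) (auto simp: a_update_def split: signal.splits)
  then show "t \<ge> 1 \<Longrightarrow> ?thesis" by (cases t) (auto simp: cfg_Suc)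
qed

lemma dead_persists: "oca_cfg sqrt_oca w t i = Dead \<Longrightarrow> oca_cfg sqrt_oca w (t + k) i = Dead"
  by (induction k) (auto simp: cfg_Suc)

(* A factor "ba" at positions j, j+1 (0-based) kills cell j+1 at time 1; the kill signal
   then reaches cell 1 at time j + 1. *)
lemma kill_spreads:
  assumes "j + 1 < length w" "w ! j = Lb" "w ! (j + 1) = La" and "d \<le> j"
  shows "oca_cfg sqrt_oca w (1 + d) (j + 1 - d) = Dead"
  using assms(4)
proof (induction d)
  case 0
  then show ?case using assms by (simp add: cfg_Suc[of w 0, simplified] cfg_0 to_msg_def)
next
  case (Suc d)
  have prev: "oca_cfg sqrt_oca w (1 + d) (j - d + 1) = Dead"
    using Suc by (simp add: Suc_diff_le)
  have "j - d \<noteq> length w" using assms Suc.prems by simp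
  then have "oca_cfg sqrt_oca w (Suc (1 + d)) (j - d) = step (Sym Kill) (oca_cfg sqrt_oca w (1 + d) (j - d))"
    using prev by (simp add: cfg_Suc to_msg_def)
  also have "\<dots> = Dead"
    using cfg_not_Init[of "1 + d" w "j - d"] by (cases "oca_cfg sqrt_oca w (1 + d) (j - d)") auto
  finally show ?case using Suc.prems by (simp add: Suc_diff_le)
qed

lemma ACell_origin: "oca_cfg sqrt_oca w t i = ACell z q f mk r \<Longrightarrow> w ! (i - 1) = La"
proof (induction t arbitrary: z q f mk r)
  case 0
  then show ?case by (simp add: cfg_0)
next
  case (Suc t)
  let ?s = "oca_cfg sqrt_oca w t i"
  have "step x ?s = ACell z q f mk r \<Longrightarrow> ?s = Init La \<or> (\<exists>z q f mk r. ?s = ACell z q f mk r)" for x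
    by (cases ?s; cases x) (auto split: signal.splits if_splits letter.splits)
  then have "?s = Init La \<or> (\<exists>z q f mk r. ?s = ACell z q f mk r)"
    using Suc.prems by (auto simp: cfg_Suc)
  then show ?case
  proof
    assume init: "?s = Init La"
    then have "t = 0" using cfg_not_Init[of t w i La] by (cases t) auto
    then show ?thesis using init by (simp add: cfg_0)
  qed (use Suc.IH in blast)
qed

lemma cfg_all_a:
  assumes w: "w = replicate N La" and N: "N \<ge> 1"
  shows "t \<ge> 1 \<Longrightarrow> 1 \<le> i \<Longrightarrow> i \<le> N \<Longrightarrow> oca_cfg sqrt_oca w t i = ACell 0 0 0 0 (t + i = N + 1)"
proof (induction t arbitrary: i)
  case 0
  then show ?case by simp
next
  case (Suc t)
  show ?case
  proof (cases "t = 0")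
    case True
    then show ?thesis using Suc.prems w by (auto simp: cfg_Suc cfg_0 to_msg_def)
  next
    case False
    have prev: "oca_cfg sqrt_oca w t j = ACell 0 0 0 0 (t + j = N + 1)" if "1 \<le> j" "j \<le> N" for j
      using Suc.IH that False by simp
    show ?thesis
    proof (cases "i = N")
      case True
      then show ?thesis using prev[of i] Suc.prems False w
        by (simp add: cfg_Suc a_update_def z_rule_def q_rule_def f_rule_def m_rule_def)
    next
      case ne: False
      then show ?thesis using prev[of i] prev[of "i + 1"] Suc.prems w
        by (simp add: cfg_Suc to_msg_def a_update_def z_rule_def q_rule_def f_rule_def m_rule_def
            q_sending_def)
    qed
  qed
qed

lemma no_ba_factor:
  "(\<forall>j. j + 1 < length w \<longrightarrow> \<not> (w ! j = Lb \<and> w ! (j + 1) = La)) \<Longrightarrow>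
   \<exists>n m. w = replicate n La @ replicate m Lb"
proof (induction w)
  case Nil
  then show ?case by (intro exI[of _ 0]) simp
next
  case (Cons c w)
  have "\<not> (w ! j = Lb \<and> w ! (j + 1) = La)" if "j + 1 < length w" for j
    using that Cons.prems[rule_format, of "Suc j"] by simp
  then obtain n m where nm: "w = replicate n La @ replicate m Lb"
    using Cons.IH by blast
  show ?case
  proof (cases c)
    case La
    then show ?thesis using nm by (intro exI[of _ "Suc n"] exI[of _ m]) simp
  next
    case Lb
    have "n = 0"
    proof (rule ccontr)
      assume "n \<noteq> 0"
      then have "w ! 0 = La" "0 + 1 < length (c # w)" using nm by (auto simp: nth_append)
      then show False using Cons.prems[rule_format, of 0] Lb by simp
    qed
    then show ?thesis using nm Lb by (intro exI[of _ 0] exI[of _ "Suc m"]) simp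
  qed
qed

lemma accepted_shape:
  assumes acc: "oca_cfg sqrt_oca w t 1 \<in> accepting" and ne: "w \<noteq> []"
  obtains n m where "w = replicate n La @ replicate m Lb" "n \<ge> 1" "m \<ge> 1" "t = n + m"
proof -
  have t: "t = length w" using accept_time[OF acc ne] .
  have "\<not> (w ! j = Lb \<and> w ! (j + 1) = La)" if j: "j + 1 < length w" for j
  proof
    assume "w ! j = Lb \<and> w ! (j + 1) = La"
    then have "oca_cfg sqrt_oca w (j + 1) 1 = Dead" using kill_spreads[OF j, of j] by simp
    then have "oca_cfg sqrt_oca w (j + 1 + (length w - (j + 1))) 1 = Dead" by (rule dead_persists)
    then show False using acc t j ne by (simp add: accepting_def)
  qed
  then obtain n m where w: "w = replicate n La @ replicate m Lb" using no_ba_factor by blast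
  obtain z q f mk where A: "oca_cfg sqrt_oca w t 1 = ACell z q f mk True" and q: "q_sending q"
    using acc by (auto simp: accepting_def)
  have "n \<noteq> 0"
    using ACell_origin[OF A] w ne by (cases n; cases m) auto
  moreover have "m \<noteq> 0"
  proof
    assume "m = 0"
    then have "oca_cfg sqrt_oca w t 1 = ACell 0 0 0 0 True"
      using cfg_all_a[of w n t 1] w t ne by (cases t) (auto simp: cfg_0)
    then show False using A q by (simp add: q_sending_def)
  qed
  ultimately show ?thesis using that w t by simp
qed

lemma oca_lang_sqrt_oca: "oca_lang sqrt_oca = L1"
proof (intro set_eqI iffI)
  fix w assume "w \<in> oca_lang sqrt_oca"
  then obtain t where ne: "w \<noteq> []" and acc: "oca_cfg sqrt_oca w t 1 \<in> accepting"
    by (auto simp: oca_lang_def acc_sqrt_oca)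
  obtain n m where w: "w = replicate n La @ replicate m Lb" "n \<ge> 1" "m \<ge> 1" "t = n + m"
    using accepted_shape[OF acc ne] by blast
  then have "m = n + floor_sqrt n" using acc accept_sorted by simp
  then show "w \<in> L1" using w unfolding L1_def by (auto simp: nat_floor_sqrt)
next
  fix w assume "w \<in> L1"
  then obtain n where n: "n \<ge> 1" and w: "w = replicate n La @ replicate (n + floor_sqrt n) Lb"
    unfolding L1_def by (auto simp: nat_floor_sqrt)
  then have "oca_cfg sqrt_oca w (n + (n + floor_sqrt n)) 1 \<in> accepting"
    using accept_sorted[OF w n] by simp
  then show "w \<in> oca_lang sqrt_oca" using w n by (auto simp: oca_lang_def acc_sqrt_oca)
qed

lemma real_time_sqrt_oca: "oca_real_time sqrt_oca"
  unfolding oca_real_time_def oca_lang_def acc_sqrt_oca using accept_time by blast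


section \<open>Communication\<close>

(* Cell i + 1 >= 2 of a^n b^m sends only at time 0 (its letter), when the ready signal
   passes, and, if it is an a-cell at distance p, when it forwards z, q or f. *)
lemma sched_out_times:
  assumes "out (sched n m j (i + 1)) \<noteq> None"
  shows "j \<in> set [n + m - i, 2 * (n - (i + 1)) + 1, q_send (n - (i + 1)), f_time (n - (i + 1))]"
  using assms q_sending_time[of "n - (i + 1)" j]
  by (auto simp: sched_def z_sig_def f_sig_def split: if_splits)

lemma com_sorted:
  assumes w: "w = replicate n La @ replicate m Lb" and n: "n \<ge> 1" and m: "m \<ge> 1"
    and i: "1 \<le> i" "i \<le> n + m - 1"
  shows "oca_com sqrt_oca w i (n + m) \<le> 5"
proof -
  let ?p = "n - (i + 1)"
  let ?T = "[0, n + m - i, 2 * ?p + 1, q_send ?p, f_time ?p]"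
  have "{j. j < n + m \<and> out (oca_cfg sqrt_oca w j (i + 1)) \<noteq> None} \<subseteq> set ?T"
  proof
    fix j assume "j \<in> {j. j < n + m \<and> out (oca_cfg sqrt_oca w j (i + 1)) \<noteq> None}"
    then have j: "j < n + m" "out (oca_cfg sqrt_oca w j (i + 1)) \<noteq> None" by auto
    show "j \<in> set ?T"
    proof (cases "j = 0")
      case False
      then have "out (sched n m j (i + 1)) \<noteq> None"
        using j cfg_sched[OF w n m, of j "i + 1"] i by simp
      then show ?thesis using sched_out_times by auto
    qed simp
  qed
  then have "oca_com sqrt_oca w i (n + m) \<le> card (set ?T)"
    by (auto simp: oca_com_def sqrt_oca_def intro!: card_mono)
  also have "\<dots> \<le> 5" using card_length[of ?T] by simp
  finally show ?thesis .
qed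

lemma mcom_sqrt_oca: "w \<in> L1 \<Longrightarrow> oca_mcom_rt sqrt_oca w \<le> 5"
proof -
  assume "w \<in> L1"
  then obtain n where n: "n \<ge> 1" and w: "w = replicate n La @ replicate (n + floor_sqrt n) Lb"
    unfolding L1_def by (auto simp: nat_floor_sqrt)
  have "finite {oca_com sqrt_oca w i (length w) | i. 1 \<le> i \<and> i \<le> length w - 1}"
    by (rule finite_image_set) simp
  then show ?thesis unfolding oca_mcom_rt_def
    using com_sorted[OF w n] w n by (subst Max_le_iff) auto
qed


theorem mainTheorem1:
  shows "L_rt_MC_OCA (\<lambda>_. 1) L1"
proof (rule L_rt_MC_OCA_intro[where g = "\<lambda>_. 5"])
  show "is_oca sqrt_oca" by (rule is_oca_sqrt_oca)
  show "oca_real_time sqrt_oca" by (rule real_time_sqrt_oca)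
  show "oca_lang sqrt_oca = L1" by (rule oca_lang_sqrt_oca)
  show "(\<lambda>_. 5 :: real) \<in> O(\<lambda>_. 1)" by (rule bigoI[of _ 5]) simp
  show "real (oca_mcom_rt sqrt_oca w) \<le> 5" if "w \<in> L1" for w
    using mcom_sqrt_oca[OF that] by simp
qed

end
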